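(* For every $\epsilon>0$, the function $\lambda\mapsto G(e(\lambda))$ is bounded on $(\lambda^*+\epsilon,\infty)$.
   Context: Standing setup. Let $\gamma>0$; let $a_1,\dots,a_p>0$ with weights $\omega_i>0$, $\sum_i\omega_i=1$, and $b_1,\dots,b_n>0$ with weights $\pi_j>0$, $\sum_j\pi_j=1$; put $a^*=\max_i a_i$, $b^*=\max_j b_j$. Let $\mu$ be the limiting spectral distribution of $\mathbf{N}\mathbf{N}^T$ where $\mathbf{N}=\mathbf{A}^{1/2}\mathbf{G}\mathbf{B}^{1/2}$ is $k\times l$, $\mathbf{G}$ has iid mean-zero entries of variance $1/l$, $k/l\to\gamma$, and the spectral distributions of $\mathbf{A},\mathbf{B}$ converge to $\nu=\sum_i\omega_i\delta_{a_i}$ and $\underline{\nu}=\sum_j\pi_j\delta_{b_j}$. $\mu$ is a compactly supported probability measure on $[0,\infty)$; $\lambda^*>0$ is the right endpoint of its support, and $s(\lambda)=\int\frac{d\mu(t)}{t-\lambda}$ for $\lambda>\lambda^*$. Define $G(e)=\sum_{j=1}^n\frac{b_j\pi_j}{1+\gamma b_j e}$. It is known (master equations) that there is a continuous (indeed smooth) real function $e(\lambda)$ on $(\lambda^*,\infty)$, never equal to a pole $-1/(\gamma b_j)$ of $G$ and with $a_iG(e(\lambda))\ne\lambda$, satisfying $s(\lambda)=\sum_{i=1}^p\frac{\omega_i}{a_iG(e(\lambda))-\lambda}$ and $e(\lambda)=\sum_{i=1}^p\frac{a_i\omega_i}{a_iG(e(\lambda))-\lambda}$. *)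

theory Defs
  imports "HOL-Probability.Probability"
begin

definition msupport :: "real measure \<Rightarrow> real set" where
  "msupport M = {x. \<forall>r>0. 0 < emeasure M (ball x r)}"

definition Gfun :: "real \<Rightarrow> nat \<Rightarrow> (nat \<Rightarrow> real) \<Rightarrow> (nat \<Rightarrow> real) \<Rightarrow> real \<Rightarrow> real" where
  "Gfun \<gamma> n b \<pi> e = (\<Sum>j<n. b j * \<pi> j / (1 + \<gamma> * b j * e))"

end

theory Submission
  imports Defs
begin

text \<open>The master equations give the identity \<open>G(e(\<lambda>)) e(\<lambda>) = 1 + \<lambda> s(\<lambda>) = \<integral> t/(t - \<lambda>) d\<mu>(t)\<close>,
  and since \<open>\<mu>\<close> lives on \<open>(-\<infinity>, \<lambda>\<^sup>*]\<close> the integrand is bounded by \<open>1 + \<lambda>\<^sup>*/\<epsilon>\<close> for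
  \<open>\<lambda> > \<lambda>\<^sup>* + \<epsilon>\<close>. So \<open>G(e) e\<close> stays bounded: where \<open>|e|\<close> is bounded away from \<open>0\<close> this bounds
  \<open>G(e)\<close>, and where \<open>|e|\<close> is small the denominators \<open>1 + \<gamma> b\<^sub>j e\<close> of \<open>G\<close> stay above \<open>1/2\<close>.\<close>

lemma AE_le_Sup_msupport:
  fixes M :: "real measure"
  assumes sets_M: "sets M = sets borel" and bdd: "bdd_above (msupport M)"
  shows "AE t in M. t \<le> Sup (msupport M)"
proof -
  define c where "c = Sup (msupport M)"
  have "\<exists>r>0. ball x r \<in> null_sets M" if "x > c" for x
  proof -
    have "x \<notin> msupport M"
      using that bdd cSup_upper c_def by fastforce
    then show ?thesis
      using sets_M unfolding msupport_def by (auto simp: not_less null_sets_def)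
  qed
  then obtain r where r: "\<And>x. x > c \<Longrightarrow> r x > 0 \<and> ball x (r x) \<in> null_sets M"
    by metis
  obtain \<F> where \<F>: "\<F> \<subseteq> (\<lambda>x. ball x (r x)) ` {c<..}" "countable \<F>"
      "\<Union>\<F> = (\<Union>x\<in>{c<..}. ball x (r x))"
    using Lindelof_openin[of "(\<lambda>x. ball x (r x)) ` {c<..}" UNIV] by auto
  have "\<Union>\<F> \<in> null_sets M"
    using null_sets_UN'[of \<F> "\<lambda>S. S" M] \<F>(1,2) r by auto
  then have "AE t in M. t \<notin> \<Union>\<F>"
    by (rule AE_not_in)
  moreover have "{c<..} \<subseteq> \<Union>\<F>"
    unfolding \<F>(3) using r by force
  ultimately show ?thesis
    unfolding c_def[symmetric] by (elim eventually_mono) (meson UnionI greaterThan_iff not_le subsetD)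
qed

lemma abs_divide_diff_le:
  fixes c \<epsilon> l t :: real
  assumes "0 \<le> c" "0 < \<epsilon>" "c + \<epsilon> < l" "t \<le> c"
  shows "\<bar>t / (t - l)\<bar> \<le> 1 + c / \<epsilon>"
proof (cases "t \<le> 0")
  case True
  then have "\<bar>t\<bar> \<le> \<bar>t - l\<bar>"
    using assms by simp
  then have "\<bar>t / (t - l)\<bar> \<le> 1"
    using assms by (simp add: abs_divide divide_le_eq_1)
  moreover have "0 \<le> c / \<epsilon>"
    using assms by simp
  ultimately show ?thesis
    by linarith
next
  case False
  then have "t / (l - t) \<le> c / \<epsilon>"
    using assms by (intro frac_le) auto
  moreover have "\<bar>t / (t - l)\<bar> = t / (l - t)"
    using False assms by (simp add: abs_divide)
  ultimately show ?thesis
    by linarith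
qed

lemma abs_one_plus_mult_Stieltjes_le:
  fixes M :: "real measure" and c \<epsilon> l :: real
  assumes "prob_space M" and AE_le: "AE t in M. t \<le> c" and "0 \<le> c" "0 < \<epsilon>" "c + \<epsilon> < l"
  shows "\<bar>1 + l * (\<integral>t. 1 / (t - l) \<partial>M)\<bar> \<le> 1 + c / \<epsilon>"
proof (cases "integrable M (\<lambda>t. 1 / (t - l))")
  case False
  then show ?thesis
    using assms by (simp add: not_integrable_integral_eq)
next
  case True
  interpret prob_space M by fact
  define f where "f = (\<lambda>t. 1 / (t - l))"
  define h where "h t = 1 + l * f t" for t
  have f_integrable: "integrable M f"
    unfolding f_def by fact
  have h_integrable: "integrable M h"
    unfolding h_def by (intro Bochner_Integration.integrable_add integrable_const integrable_mult_right f_integrable)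
  have "(\<integral>t. h t \<partial>M) = 1 + l * (\<integral>t. f t \<partial>M)"
    unfolding h_def using f_integrable by (simp add: prob_space)
  moreover have "AE t in M. \<bar>h t\<bar> \<le> 1 + c / \<epsilon>"
    using AE_le
  proof eventually_elim
    case (elim t)
    then have "h t = t / (t - l)"
      unfolding h_def f_def using assms by (simp add: field_simps)
    then show ?case
      using abs_divide_diff_le[OF assms(3-5) elim] by simp
  qed
  then have "(\<integral>t. h t \<partial>M) \<le> 1 + c / \<epsilon>" "- (1 + c / \<epsilon>) \<le> (\<integral>t. h t \<partial>M)"
    by (auto intro!: integral_le_const integral_ge_const h_integrable elim: AE_mp)
  ultimately show ?thesis
    unfolding f_def by linarith
qed

lemma mult_sum_resolvent:
  fixes a \<omega> :: "'i \<Rightarrow> real" and g l :: real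
  assumes "(\<Sum>i\<in>I. \<omega> i) = 1" and "\<And>i. i \<in> I \<Longrightarrow> a i * g \<noteq> l"
  shows "g * (\<Sum>i\<in>I. a i * \<omega> i / (a i * g - l)) = 1 + l * (\<Sum>i\<in>I. \<omega> i / (a i * g - l))"
proof -
  have "g * (\<Sum>i\<in>I. a i * \<omega> i / (a i * g - l)) = (\<Sum>i\<in>I. \<omega> i + l * (\<omega> i / (a i * g - l)))"
    unfolding sum_distrib_left
    using assms(2) by (intro sum.cong) (auto simp: field_simps)
  also have "\<dots> = 1 + l * (\<Sum>i\<in>I. \<omega> i / (a i * g - l))"
    using assms(1) by (simp add: sum.distrib sum_distrib_left)
  finally show ?thesis .
qed

lemma abs_Gfun_le_near_zero:
  assumes "\<And>j. j < n \<Longrightarrow> \<bar>\<gamma> * b j * x\<bar> \<le> 1/2" and "\<And>j. j < n \<Longrightarrow> 0 \<le> b j * \<pi> j"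
  shows "\<bar>Gfun \<gamma> n b \<pi> x\<bar> \<le> 2 * (\<Sum>j<n. b j * \<pi> j)"
proof -
  have "\<bar>b j * \<pi> j / (1 + \<gamma> * b j * x)\<bar> \<le> 2 * (b j * \<pi> j)" if "j < n" for j
  proof -
    have denom: "1/2 \<le> 1 + \<gamma> * b j * x"
      using assms(1)[OF that] by linarith
    then have "\<bar>b j * \<pi> j / (1 + \<gamma> * b j * x)\<bar> = b j * \<pi> j / (1 + \<gamma> * b j * x)"
      using assms(2)[OF that] by simp
    also have "\<dots> \<le> b j * \<pi> j / (1/2)"
      using denom assms(2)[OF that] by (intro divide_left_mono) auto
    finally show ?thesis
      by simp
  qed
  then have "\<bar>Gfun \<gamma> n b \<pi> x\<bar> \<le> (\<Sum>j<n. 2 * (b j * \<pi> j))"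
    unfolding Gfun_def by (intro order_trans[OF sum_abs] sum_mono) auto
  then show ?thesis
    by (simp add: sum_distrib_left)
qed

lemma Gfun_bounded_where_mult_bounded:
  assumes "0 \<le> \<gamma>" and b_nonneg: "\<And>j. j < n \<Longrightarrow> 0 \<le> b j"
    and \<pi>_nonneg: "\<And>j. j < n \<Longrightarrow> 0 \<le> \<pi> j"
  obtains C where "\<And>x. \<bar>Gfun \<gamma> n b \<pi> x * x\<bar> \<le> K \<Longrightarrow> \<bar>Gfun \<gamma> n b \<pi> x\<bar> \<le> C"
proof
  define B where "B = (\<Sum>j<n. b j)"
  define \<delta> where "\<delta> = 1 / (2 * (1 + \<gamma> * B))"
  have "0 \<le> B"
    unfolding B_def using b_nonneg by (auto intro: sum_nonneg)
  then have denom_pos: "0 < 1 + \<gamma> * B"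
    using assms(1) by (simp add: add_pos_nonneg)
  then have \<delta>_pos: "0 < \<delta>"
    unfolding \<delta>_def by simp
  fix x
  assume bound: "\<bar>Gfun \<gamma> n b \<pi> x * x\<bar> \<le> K"
  show "\<bar>Gfun \<gamma> n b \<pi> x\<bar> \<le> max (K / \<delta>) (2 * (\<Sum>j<n. b j * \<pi> j))"
  proof (cases "\<bar>x\<bar> \<le> \<delta>")
    case True
    have "\<bar>\<gamma> * b j * x\<bar> \<le> 1/2" if "j < n" for j
    proof -
      have "b j \<le> B"
        unfolding B_def using that b_nonneg by (intro member_le_sum) auto
      then have "\<bar>\<gamma> * b j * x\<bar> \<le> \<gamma> * B * \<delta>"
        using True assms(1) b_nonneg[OF that]
        by (auto simp: abs_mult intro!: mult_mono)
      also have "\<dots> \<le> (1 + \<gamma> * B) * \<delta>"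
        using \<delta>_pos by simp
      also have "\<dots> = 1/2"
        unfolding \<delta>_def using denom_pos by simp
      finally show ?thesis .
    qed
    then show ?thesis
      using abs_Gfun_le_near_zero[of n \<gamma> b x \<pi>] b_nonneg \<pi>_nonneg by force
  next
    case False
    then have "\<bar>Gfun \<gamma> n b \<pi> x\<bar> * \<delta> \<le> \<bar>Gfun \<gamma> n b \<pi> x\<bar> * \<bar>x\<bar>"
      by (intro mult_left_mono) auto
    also have "\<dots> \<le> K"
      using bound by (simp add: abs_mult)
    finally have "\<bar>Gfun \<gamma> n b \<pi> x\<bar> * \<delta> \<le> K" .
    then have "\<bar>Gfun \<gamma> n b \<pi> x\<bar> \<le> K / \<delta>"
      using \<delta>_pos by (simp add: le_divide_eq)
    then show ?thesis
      by (simp add: le_max_iff_disj)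
  qed
qed

theorem lemma3p2:
  fixes \<gamma> :: real and p n :: nat
    and a \<omega> b \<pi> :: "nat \<Rightarrow> real"
    and \<mu> :: "real measure" and lam_star \<epsilon> :: real and e :: "real \<Rightarrow> real"
  assumes gamma_pos: "\<gamma> > 0"
    and a_pos: "\<forall>i<p. a i > 0" and omega_pos: "\<forall>i<p. \<omega> i > 0"
    and omega_sum: "(\<Sum>i<p. \<omega> i) = 1"
    and b_pos: "\<forall>j<n. b j > 0" and pi_pos: "\<forall>j<n. \<pi> j > 0"
    and pi_sum: "(\<Sum>j<n. \<pi> j) = 1"
    and mu_prob: "prob_space \<mu>" and mu_borel: "sets \<mu> = sets borel"
    and supp_compact: "compact (msupport \<mu>)"
    and supp_nonneg: "msupport \<mu> \<subseteq> {0..}"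
    and lam_star_def: "lam_star = Sup (msupport \<mu>)"
    and lam_star_pos: "lam_star > 0"
    and e_cont: "continuous_on {lam_star<..} e"
    and e_nonpole: "\<forall>l>lam_star. \<forall>j<n. 1 + \<gamma> * b j * e l \<noteq> 0"
    and e_ne: "\<forall>l>lam_star. \<forall>i<p. a i * Gfun \<gamma> n b \<pi> (e l) \<noteq> l"
    and master_s: "\<forall>l>lam_star. (\<integral>t. 1 / (t - l) \<partial>\<mu>)
                     = (\<Sum>i<p. \<omega> i / (a i * Gfun \<gamma> n b \<pi> (e l) - l))"
    and master_e: "\<forall>l>lam_star. e l
                     = (\<Sum>i<p. a i * \<omega> i / (a i * Gfun \<gamma> n b \<pi> (e l) - l))"
    and eps_pos: "\<epsilon> > 0"
  shows "bounded ((\<lambda>l. Gfun \<gamma> n b \<pi> (e l)) ` {lam_star + \<epsilon><..})"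
proof -
  interpret prob_space \<mu> by (rule mu_prob)
  have AE_le: "AE t in \<mu>. t \<le> lam_star"
    unfolding lam_star_def
    using AE_le_Sup_msupport[OF mu_borel] supp_compact
    by (simp add: bounded_imp_bdd_above compact_imp_bounded)
  obtain C where C: "\<And>x. \<bar>Gfun \<gamma> n b \<pi> x * x\<bar> \<le> 1 + lam_star / \<epsilon> \<Longrightarrow> \<bar>Gfun \<gamma> n b \<pi> x\<bar> \<le> C"
    using gamma_pos b_pos pi_pos
    by (metis Gfun_bounded_where_mult_bounded less_imp_le)
  have "\<bar>Gfun \<gamma> n b \<pi> (e l)\<bar> \<le> C" if l: "l > lam_star + \<epsilon>" for l
  proof -
    define g where "g = Gfun \<gamma> n b \<pi> (e l)"
    have "l > lam_star"
      using l eps_pos by simp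
    then have "e l = (\<Sum>i<p. a i * \<omega> i / (a i * g - l))"
      and "(\<integral>t. 1 / (t - l) \<partial>\<mu>) = (\<Sum>i<p. \<omega> i / (a i * g - l))"
      and "\<And>i. i \<in> {..<p} \<Longrightarrow> a i * g \<noteq> l"
      unfolding g_def using master_e master_s e_ne by blast+
    then have "g * e l = 1 + l * (\<integral>t. 1 / (t - l) \<partial>\<mu>)"
      using mult_sum_resolvent[OF omega_sum, of a g l] by simp
    then have "\<bar>g * e l\<bar> \<le> 1 + lam_star / \<epsilon>"
      using abs_one_plus_mult_Stieltjes_le[OF mu_prob AE_le] lam_star_pos eps_pos l by simp
    then show ?thesis
      unfolding g_def by (rule C)
  qed
  then show ?thesis
    unfolding bounded_iff by (intro exI[of _ C]) auto
qed

end
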